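(* Let $\mathfrak n=W\oplus\mathfrak z$ be a finite-dimensional 2-step nilpotent Lie algebra over a field of characteristic zero which is of TST type and satisfies $(\Lambda^2\mathfrak n)^{\mathfrak n}=\Lambda^2\mathfrak z$. Then every Lie bialgebra structure $\delta$ on $\mathfrak n$ is of the following form: there are $\delta_{\mathfrak z}$, $D^1,\dots,D^m$, $\varphi$ satisfying conditions (a), (b), (c) below such that $\delta(z)=\delta_{\mathfrak z}(z)$ for $z\in\mathfrak z$ and $\delta(v)=\sum_iD^i(v)\wedge z_i+\varphi(v)$ for $v\in W$. (a) $\delta_{\mathfrak z}:\mathfrak z\to\Lambda^2\mathfrak z$ satisfies co-Jacobi; write $\delta_{\mathfrak z}(z_i)=\sum_{a<b}c_i^{ab}z_a\wedge z_b$. (b) $D^i:W\to W$ are linear with $[D^a,D^b]=\sum_ic_i^{ab}D^i$ for $a<b$, and for all $x,y\in W$: $\sum_iT_i(x)(y)\delta_{\mathfrak z}(z_i)=\sum_{i,j}(T_i(D^jx)(y)+T_i(x)(D^jy))z_i\wedge z_j$. (c) $\varphi:W\to\Lambda^2\mathfrak z$, $\varphi(v)=\sum_{a<b}\varphi_{ab}(v)z_a\wedge z_b$, is linear with $\sum_i\varphi(D^iv)\wedge z_i+\sum_{a<b}\varphi_{ab}(v)(\delta_{\mathfrak z}(z_a)\wedge z_b-z_a\wedge\delta_{\mathfrak z}(z_b))=0$ for all $v\in W$.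
   Context: $\mathfrak z$ is the center with basis $z_1,\dots,z_m$, $W$ a linear complement, $T_i:W\to W^*$ defined by $[v,w]=\sum_iT_i(v)(w)z_i$. $\mathfrak n$ is of TST type if the only linear $S:W^*\to W$ with $T_iST_k+T_kST_i=0$ for all $i,k$ is $S=0$. $(\Lambda^2\mathfrak n)^{\mathfrak n}$ is the space of invariants for $\mathrm{ad}_x(a\wedge b)=[x,a]\wedge b+a\wedge[x,b]$. Lie bialgebra structure: linear $\delta:\mathfrak n\to\Lambda^2\mathfrak n$ with co-Jacobi ($\delta(x_1)\wedge x_2-x_1\wedge\delta(x_2)=0$, Sweedler $\delta(x)=x_1\wedge x_2$) and $\delta[x,y]=[\delta x,y]+[x,\delta y]$. *)

theory Defs
  imports Main
begin

text \<open>The Lie algebra n has basis indexed by the finite type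
  'w + 'z: basis vectors Inl p span the complement W, basis vectors Inr i are
  z_1,...,z_m spanning the centre. Elements of
  the exterior square are skew-symmetric matrices (a wedge b has entries
  a_p b_q - a_q b_p), elements of the third exterior power are alternating
  3-tensors. In characteristic zero these are the exterior powers.\<close>

definition unitv :: "'i \<Rightarrow> 'i \<Rightarrow> 'k::field" where
  "unitv r = (\<lambda>s. if s = r then 1 else 0)"

definition skew :: "('i \<Rightarrow> 'i \<Rightarrow> 'k::field) \<Rightarrow> bool" where
  "skew A \<longleftrightarrow> (\<forall>p q. A p q = - A q p)"

definition wedge :: "('i \<Rightarrow> 'k::field) \<Rightarrow> ('i \<Rightarrow> 'k) \<Rightarrow> 'i \<Rightarrow> 'i \<Rightarrow> 'k" where
  "wedge a b = (\<lambda>p q. a p * b q - a q * b p)"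

text \<open>2-form wedge 1-form and 1-form wedge 2-form, as alternating 3-tensors.\<close>
definition wedge21 :: "('i \<Rightarrow> 'i \<Rightarrow> 'k::field) \<Rightarrow> ('i \<Rightarrow> 'k) \<Rightarrow> 'i \<Rightarrow> 'i \<Rightarrow> 'i \<Rightarrow> 'k" where
  "wedge21 B c = (\<lambda>p q r. B p q * c r + B q r * c p + B r p * c q)"

definition wedge12 :: "('i \<Rightarrow> 'k::field) \<Rightarrow> ('i \<Rightarrow> 'i \<Rightarrow> 'k) \<Rightarrow> 'i \<Rightarrow> 'i \<Rightarrow> 'i \<Rightarrow> 'k" where
  "wedge12 a B = (\<lambda>p q r. a p * B q r + a q * B r p + a r * B p q)"

definition linear2 :: "(('i \<Rightarrow> 'k::field) \<Rightarrow> 'i \<Rightarrow> 'i \<Rightarrow> 'k) \<Rightarrow> bool" where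
  "linear2 f \<longleftrightarrow> (\<forall>x y. f (\<lambda>r. x r + y r) = (\<lambda>p q. f x p q + f y p q)) \<and>
                 (\<forall>c x. f (\<lambda>r. c * x r) = (\<lambda>p q. c * f x p q))"

text \<open>co-Jacobi: delta(x_1) wedge x_2 - x_1 wedge delta(x_2) = 0 (Sweedler notation
  delta(x) = x_1 wedge x_2); with delta(x) = sum_{p,q} (A_pq/2) e_p wedge e_q.\<close>
definition cojacobi :: "('i::finite) itself \<Rightarrow> (('i \<Rightarrow> 'k::field) \<Rightarrow> 'i \<Rightarrow> 'i \<Rightarrow> 'k) \<Rightarrow> bool" where
  "cojacobi _ d \<longleftrightarrow> (\<forall>x p' q' r'.
     (\<Sum>p\<in>UNIV. \<Sum>q\<in>UNIV. d x p q / 2 *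
        (wedge21 (d (unitv p)) (unitv q) p' q' r' - wedge12 (unitv p) (d (unitv q)) p' q' r')) = 0)"

definition br :: "('i::finite \<Rightarrow> 'i \<Rightarrow> 'i \<Rightarrow> 'k::field) \<Rightarrow> ('i \<Rightarrow> 'k) \<Rightarrow> ('i \<Rightarrow> 'k) \<Rightarrow> 'i \<Rightarrow> 'k" where
  "br C x y = (\<lambda>r. \<Sum>p\<in>UNIV. \<Sum>q\<in>UNIV. x p * y q * C p q r)"

definition lie_algebra :: "('i::finite \<Rightarrow> 'i \<Rightarrow> 'i \<Rightarrow> 'k::field) \<Rightarrow> bool" where
  "lie_algebra C \<longleftrightarrow> (\<forall>x. br C x x = (\<lambda>_. 0)) \<and>
     (\<forall>x y z. (\<lambda>r. br C x (br C y z) r + br C y (br C z x) r + br C z (br C x y) r) = (\<lambda>_. 0))"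

definition two_step_nilpotent :: "('i::finite \<Rightarrow> 'i \<Rightarrow> 'i \<Rightarrow> 'k::field) \<Rightarrow> bool" where
  "two_step_nilpotent C \<longleftrightarrow> (\<forall>x y z. br C x (br C y z) = (\<lambda>_. 0)) \<and> (\<exists>x y. br C x y \<noteq> (\<lambda>_. 0))"

definition center :: "('i::finite \<Rightarrow> 'i \<Rightarrow> 'i \<Rightarrow> 'k::field) \<Rightarrow> ('i \<Rightarrow> 'k) set" where
  "center C = {x. \<forall>y. br C x y = (\<lambda>_. 0)}"

text \<open>ad_x(a wedge b) = [x,a] wedge b + a wedge [x,b], on skew matrices.\<close>
definition adL :: "('i::finite \<Rightarrow> 'i \<Rightarrow> 'i \<Rightarrow> 'k::field) \<Rightarrow> ('i \<Rightarrow> 'k) \<Rightarrow> ('i \<Rightarrow> 'i \<Rightarrow> 'k) \<Rightarrow> 'i \<Rightarrow> 'i \<Rightarrow> 'k" where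
  "adL C x A = (\<lambda>p q. \<Sum>r\<in>UNIV. br C x (unitv r) p * A r q + A p r * br C x (unitv r) q)"

definition lie_bialgebra :: "('i::finite \<Rightarrow> 'i \<Rightarrow> 'i \<Rightarrow> 'k::field) \<Rightarrow> (('i \<Rightarrow> 'k) \<Rightarrow> 'i \<Rightarrow> 'i \<Rightarrow> 'k) \<Rightarrow> bool" where
  "lie_bialgebra C d \<longleftrightarrow> linear2 d \<and> (\<forall>x. skew (d x)) \<and> cojacobi TYPE('i) d \<and>
     (\<forall>x y. d (br C x y) = (\<lambda>p q. adL C x (d y) p q - adL C y (d x) p q))"

definition embW :: "('w \<Rightarrow> 'k::field) \<Rightarrow> 'w + 'z \<Rightarrow> 'k" where
  "embW v = case_sum v (\<lambda>_. 0)"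

definition embZ :: "('z \<Rightarrow> 'k::field) \<Rightarrow> 'w + 'z \<Rightarrow> 'k" where
  "embZ z = case_sum (\<lambda>_. 0) z"

definition embL2 :: "('z \<Rightarrow> 'z \<Rightarrow> 'k::field) \<Rightarrow> 'w + 'z \<Rightarrow> 'w + 'z \<Rightarrow> 'k" where
  "embL2 B = (\<lambda>p q. case (p, q) of (Inr i, Inr j) \<Rightarrow> B i j | _ \<Rightarrow> 0)"

definition invariants2 :: "('i::finite \<Rightarrow> 'i \<Rightarrow> 'i \<Rightarrow> 'k::field) \<Rightarrow> ('i \<Rightarrow> 'i \<Rightarrow> 'k) set" where
  "invariants2 C = {A. skew A \<and> (\<forall>x. adL C x A = (\<lambda>_ _. 0))}"

definition Lambda2z :: "('w + 'z \<Rightarrow> 'w + 'z \<Rightarrow> 'k::field) set" where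
  "Lambda2z = embL2 ` {B. skew B}"

text \<open>T_i(v)(w) = coefficient of z_i in [v,w]; T_i(v) as covector in W* (coordinates
  w.r.t. the dual basis).\<close>
definition Tform :: "('w::finite + 'z::finite \<Rightarrow> 'w + 'z \<Rightarrow> 'w + 'z \<Rightarrow> 'k::field) \<Rightarrow> 'z \<Rightarrow> ('w \<Rightarrow> 'k) \<Rightarrow> ('w \<Rightarrow> 'k) \<Rightarrow> 'k"
  where "Tform C i v w = br C (embW v) (embW w) (Inr i)"

definition Tcov :: "('w::finite + 'z::finite \<Rightarrow> 'w + 'z \<Rightarrow> 'w + 'z \<Rightarrow> 'k::field) \<Rightarrow> 'z \<Rightarrow> ('w \<Rightarrow> 'k) \<Rightarrow> 'w \<Rightarrow> 'k"
  where "Tcov C i v = (\<lambda>q. Tform C i v (unitv q))"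

text \<open>A linear map S : W* \<rightarrow> W given by its matrix.\<close>
definition Smap :: "('w::finite \<Rightarrow> 'w \<Rightarrow> 'k::field) \<Rightarrow> ('w \<Rightarrow> 'k) \<Rightarrow> 'w \<Rightarrow> 'k" where
  "Smap S f = (\<lambda>p. \<Sum>q\<in>UNIV. S p q * f q)"

definition tst_type :: "('w::finite + 'z::finite \<Rightarrow> 'w + 'z \<Rightarrow> 'w + 'z \<Rightarrow> 'k::field) \<Rightarrow> bool" where
  "tst_type C \<longleftrightarrow> (\<forall>S :: 'w \<Rightarrow> 'w \<Rightarrow> 'k.
     (\<forall>i k v. (\<lambda>q. Tcov C i (Smap S (Tcov C k v)) q + Tcov C k (Smap S (Tcov C i v)) q) = (\<lambda>_. 0))
     \<longrightarrow> S = (\<lambda>_ _. 0))"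

definition matv :: "('w::finite \<Rightarrow> 'w \<Rightarrow> 'k::field) \<Rightarrow> ('w \<Rightarrow> 'k) \<Rightarrow> 'w \<Rightarrow> 'k" where
  "matv M v = (\<lambda>p. \<Sum>q\<in>UNIV. M p q * v q)"

definition linext :: "('j::finite \<Rightarrow> 'i \<Rightarrow> 'i \<Rightarrow> 'k::field) \<Rightarrow> ('j \<Rightarrow> 'k) \<Rightarrow> 'i \<Rightarrow> 'i \<Rightarrow> 'k" where
  "linext F x = (\<lambda>a b. \<Sum>j\<in>UNIV. x j * F j a b)"

end

theory Submission
  imports Defs
begin

(* Since the centre z is killed by ad, the cocycle condition makes delta(z) an ad-invariant,
   hence an element of Lambda^2 z. For v, w in W the bracket [v, w] is central, so the
   (z, W) entries of the cocycle condition show that the (W, W) block A_y of delta(e_y)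
   satisfies T_i A_y T_k + T_k A_y T_i = 0, and the TST property forces A_y = 0. Thus delta(v)
   only has (W, z) and (z, z) components, which define the D^i and phi. Conditions (a), (b)
   and (c) are then the components of co-Jacobi on (z, z, z) at z, on (W, z, z) and
   (z, z, z) at W, together with the (z, z) component of the cocycle condition on [W, W]. *)

lemma mult_if_zero_right [simp]: "a * (if c then b else 0) = (if c then a * b else (0 :: 'a::mult_zero))"
  and mult_if_zero_left [simp]: "(if c then b else 0) * a = (if c then b * a else (0 :: 'a::mult_zero))"
  by simp_all

lemma sum_unitv [simp]:
  fixes f :: "'i::finite \<Rightarrow> 'k::field"
  shows "(\<Sum>s\<in>UNIV. f s * unitv r s) = f r" "(\<Sum>s\<in>UNIV. unitv r s * f s) = f r"
    and "(\<Sum>s\<in>UNIV. f s * unitv s r) = f r" "(\<Sum>s\<in>UNIV. unitv s r * f s) = f r"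
  by (simp_all add: unitv_def)

lemma sum_UNIV_Plus:
  "(\<Sum>x\<in>(UNIV :: ('a::finite + 'b::finite) set). f x) = (\<Sum>a\<in>UNIV. f (Inl a)) + (\<Sum>b\<in>UNIV. f (Inr b))"
proof -
  have "sum f UNIV = sum f (UNIV <+> UNIV)" by (simp add: UNIV_Plus_UNIV)
  also have "\<dots> = (\<Sum>a\<in>UNIV. f (Inl a)) + (\<Sum>b\<in>UNIV. f (Inr b))"
    by (subst sum.Plus) (auto simp: comp_def)
  finally show ?thesis .
qed

lemma embW_apply: "embW u (Inl p) = u p" "embW u (Inr i) = 0"
  by (simp_all add: embW_def)

lemma embW_unitv: "embW (unitv p) = (unitv (Inl p) :: 'w + 'z \<Rightarrow> 'k::field)"
  by (auto simp: embW_def unitv_def split: sum.split)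

lemma embZ_unitv: "embZ (unitv i) = (unitv (Inr i) :: 'w + 'z \<Rightarrow> 'k::field)"
  by (auto simp: embZ_def unitv_def split: sum.split)

lemma linear2_add: "linear2 f \<Longrightarrow> f (\<lambda>r. x r + y r) = (\<lambda>p q. f x p q + f y p q)"
  and linear2_scale: "linear2 f \<Longrightarrow> f (\<lambda>r. c * x r) = (\<lambda>p q. c * f x p q)"
  unfolding linear2_def by blast+

lemma linear2_zero: "linear2 f \<Longrightarrow> f (\<lambda>_. 0) = (\<lambda>_ _. 0)"
  using linear2_scale[of f 0 "\<lambda>_. 0"] by simp

lemma linear2_sum:
  assumes "linear2 f" "finite S"
  shows "f (\<lambda>r. \<Sum>j\<in>S. c j * g j r) = (\<lambda>p q. \<Sum>j\<in>S. c j * f (g j) p q)"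
  using assms(2)
proof (induction S rule: finite_induct)
  case empty
  then show ?case using linear2_zero[OF assms(1)] by simp
next
  case (insert j S)
  have "f (\<lambda>r. \<Sum>j\<in>insert j S. c j * g j r) = f (\<lambda>r. c j * g j r + (\<Sum>j\<in>S. c j * g j r))"
    using insert by simp
  also have "\<dots> = (\<lambda>p q. c j * f (g j) p q + f (\<lambda>r. \<Sum>j\<in>S. c j * g j r) p q)"
    unfolding linear2_add[OF assms(1), of "\<lambda>r. c j * g j r" "\<lambda>r. \<Sum>j\<in>S. c j * g j r"]
      linear2_scale[OF assms(1), of "c j" "g j"] ..
  finally show ?case using insert by simp
qed

lemma linear2_expand:
  assumes "linear2 (f :: ('i::finite \<Rightarrow> 'k::field) \<Rightarrow> _)"
  shows "f x P Q = (\<Sum>R\<in>UNIV. x R * f (unitv R) P Q)"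
proof -
  have "f x = f (\<lambda>r. \<Sum>R\<in>UNIV. x R * unitv R r)" by simp
  also have "\<dots> = (\<lambda>p q. \<Sum>R\<in>UNIV. x R * f (unitv R) p q)"
    by (rule linear2_sum[OF assms finite_UNIV])
  finally show ?thesis by simp
qed

lemma cojacobi_term_cyclic:
  fixes d :: "('i::finite \<Rightarrow> 'k::field_char_0) \<Rightarrow> 'i \<Rightarrow> 'i \<Rightarrow> 'k"
  assumes "skew (d x)"
  shows "(\<Sum>P\<in>UNIV. \<Sum>Q\<in>UNIV. d x P Q / 2 *
        (wedge21 (d (unitv P)) (unitv Q) p q r - wedge12 (unitv P) (d (unitv Q)) p q r))
     = (\<Sum>P\<in>UNIV. d x P r * d (unitv P) p q + d x P p * d (unitv P) q r + d x P q * d (unitv P) r p)"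
proof -
  have sk: "\<And>a b. d x a b = - d x b a" using assms unfolding skew_def by blast
  have left: "(\<Sum>P\<in>UNIV. \<Sum>Q\<in>UNIV. d x P Q / 2 * wedge21 (d (unitv P)) (unitv Q) p q r)
     = (\<Sum>P\<in>UNIV. d x P r / 2 * d (unitv P) p q + d x P p / 2 * d (unitv P) q r + d x P q / 2 * d (unitv P) r p)"
    by (simp add: wedge21_def distrib_left sum.distrib unitv_def)
  have "(\<Sum>P\<in>UNIV. \<Sum>Q\<in>UNIV. d x P Q / 2 * wedge12 (unitv P) (d (unitv Q)) p q r)
     = (\<Sum>Q\<in>UNIV. d x p Q / 2 * d (unitv Q) q r + d x q Q / 2 * d (unitv Q) r p + d x r Q / 2 * d (unitv Q) p q)"
    by (subst sum.swap) (simp add: wedge12_def distrib_left sum.distrib unitv_def)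
  also have "\<dots> = - (\<Sum>P\<in>UNIV. d x P r / 2 * d (unitv P) p q + d x P p / 2 * d (unitv P) q r + d x P q / 2 * d (unitv P) r p)"
    by (simp add: sk[of p] sk[of q] sk[of r] sum_negf[symmetric] algebra_simps)
  finally have right: "(\<Sum>P\<in>UNIV. \<Sum>Q\<in>UNIV. d x P Q / 2 * wedge12 (unitv P) (d (unitv Q)) p q r)
     = - (\<Sum>P\<in>UNIV. d x P r / 2 * d (unitv P) p q + d x P p / 2 * d (unitv P) q r + d x P q / 2 * d (unitv P) r p)" .
  show ?thesis
    unfolding right_diff_distrib sum_subtractf left right
    by (simp add: sum.distrib[symmetric]) (rule sum.cong, simp_all add: field_simps)
qed

lemma cojacobi_iff_cyclic:
  fixes d :: "('i::finite \<Rightarrow> 'k::field_char_0) \<Rightarrow> 'i \<Rightarrow> 'i \<Rightarrow> 'k"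
  assumes "\<And>x. skew (d x)"
  shows "cojacobi TYPE('i) d \<longleftrightarrow> (\<forall>x p q r.
    (\<Sum>P\<in>UNIV. d x P r * d (unitv P) p q + d x P p * d (unitv P) q r + d x P q * d (unitv P) r p) = 0)"
  unfolding cojacobi_def by (simp only: cojacobi_term_cyclic[of d, OF assms])

lemma sum_less_pairs_half:
  fixes f :: "'z::{finite,linorder} \<Rightarrow> 'z \<Rightarrow> 'k::field_char_0"
  assumes f_sym: "\<And>a b. f a b = f b a" and f_diag: "\<And>a. f a a = 0"
  shows "(\<Sum>a\<in>UNIV. \<Sum>b\<in>{b. a < b}. f a b) = (\<Sum>a\<in>UNIV. \<Sum>b\<in>UNIV. f a b) / 2"
proof -
  have f_split: "f a b = (if a < b then f a b else 0) + (if b < a then f a b else 0)" for a b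
    using less_linear[of a b] f_diag by auto
  have "(\<Sum>a\<in>UNIV. \<Sum>b\<in>UNIV. if b < a then f a b else 0) = (\<Sum>b\<in>UNIV. \<Sum>a\<in>UNIV. if b < a then f b a else 0)"
    by (subst sum.swap) (intro sum.cong refl, simp add: f_sym)
  then have "(\<Sum>a\<in>UNIV. \<Sum>b\<in>UNIV. f a b) = 2 * (\<Sum>a\<in>UNIV. \<Sum>b\<in>UNIV. if a < b then f a b else 0)"
    by (subst f_split) (simp add: sum.distrib)
  then show ?thesis
    by (simp add: sum.inter_filter[symmetric])
qed

lemma br_unitv: "br C (unitv P) (unitv Q) r = C P Q r"
  by (simp add: br_def unitv_def)

lemma br_add:
  "br C (\<lambda>s. x s + y s) (\<lambda>s. u s + v s) r = br C x u r + br C x v r + br C y u r + br C y v r"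
  by (simp add: br_def algebra_simps sum.distrib)

lemma lie_algebra_br_antisym:
  assumes "lie_algebra C"
  shows "br C x y r = - br C y x r"
proof -
  have "\<And>x. br C x x r = 0" using assms unfolding lie_algebra_def by metis
  then show ?thesis using br_add[of C x y x y r] by (simp add: eq_neg_iff_add_eq_0 add_ac)
qed

lemma lie_algebra_struct_antisym: "lie_algebra C \<Longrightarrow> C P Q r = - C Q P r"
  using lie_algebra_br_antisym[of C "unitv P" "unitv Q" r] by (simp add: br_unitv)

lemma Tform_coord: "Tform C i x y = (\<Sum>p\<in>UNIV. \<Sum>q\<in>UNIV. x p * y q * C (Inl p) (Inl q) (Inr i))"
  by (simp add: Tform_def br_def sum_UNIV_Plus embW_def)

lemma Tcov_coord: "Tcov C i v = (\<lambda>q. \<Sum>p\<in>UNIV. v p * C (Inl p) (Inl q) (Inr i))"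
  by (simp add: Tcov_def Tform_coord unitv_def)

lemma sum_wedge_unitv:
  fixes f :: "'i::finite \<Rightarrow> 'i \<Rightarrow> 'k::field"
  shows "(\<Sum>i\<in>UNIV. \<Sum>j\<in>UNIV. f i j * wedge (unitv i) (unitv j) a b) = f a b - f b a"
  by (simp add: wedge_def unitv_def right_diff_distrib sum_subtractf)

lemma sum_less_pairs_wedge:
  fixes L :: "'z::{finite,linorder} \<Rightarrow> 'z \<Rightarrow> 'k::field_char_0"
  assumes "skew L"
  shows "(\<Sum>a'\<in>UNIV. \<Sum>b'\<in>{b'. a' < b'}. L a' b' *
            (wedge21 (B a') (unitv b') a b c - wedge12 (unitv a') (B b') a b c))
       = (\<Sum>j\<in>UNIV. L j c * B j a b + L j a * B j b c + L j b * B j c a)"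
proof -
  have L_antisym: "L x y = - L y x" for x y
    using assms unfolding skew_def by blast
  define W where "W x y = wedge21 (B x) (unitv y) a b c" for x y
  have W_swap: "wedge12 (unitv x) (B y) a b c = W y x" for x y
    unfolding W_def wedge12_def wedge21_def by (simp add: algebra_simps)
  have sum_swap: "(\<Sum>a'\<in>UNIV. \<Sum>b'\<in>UNIV. L a' b' * W b' a') = - (\<Sum>a'\<in>UNIV. \<Sum>b'\<in>UNIV. L a' b' * W a' b')"
    by (subst sum.swap) (simp add: sum_negf[symmetric], intro sum.cong refl, subst L_antisym, simp)
  have "(\<Sum>a'\<in>UNIV. \<Sum>b'\<in>{b'. a' < b'}. L a' b' *
            (wedge21 (B a') (unitv b') a b c - wedge12 (unitv a') (B b') a b c))
      = (\<Sum>a'\<in>UNIV. \<Sum>b'\<in>{b'. a' < b'}. L a' b' * (W a' b' - W b' a'))"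
    by (simp add: W_swap W_def)
  also have "\<dots> = (\<Sum>a'\<in>UNIV. \<Sum>b'\<in>UNIV. L a' b' * (W a' b' - W b' a')) / 2"
  proof (rule sum_less_pairs_half)
    show "L x y * (W x y - W y x) = L y x * (W y x - W x y)" for x y
      using L_antisym[of x y] by (simp add: algebra_simps)
  qed simp
  also have "\<dots> = (\<Sum>a'\<in>UNIV. \<Sum>b'\<in>UNIV. L a' b' * W a' b')"
    by (simp add: right_diff_distrib sum_subtractf sum_swap)
  also have "\<dots> = (\<Sum>j\<in>UNIV. L j c * B j a b + L j a * B j b c + L j b * B j c a)"
    by (simp add: W_def wedge21_def distrib_left sum.distrib unitv_def algebra_simps cong: if_cong)
  finally show ?thesis .
qed

lemma Tform_antisym: "lie_algebra C \<Longrightarrow> Tform C i x y = - Tform C i y x"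
  unfolding Tform_def by (rule lie_algebra_br_antisym)

lemma Tform_expand_right: "(\<Sum>s\<in>UNIV. Tform C i x (unitv s) * u s) = Tform C i x u"
  by (simp add: Tform_coord unitv_def sum_distrib_left sum_distrib_right mult_ac) (rule sum.swap)

lemma linext_skew:
  assumes "\<And>j. skew (F j)"
  shows "skew (linext F x)"
  unfolding skew_def linext_def sum_negf[symmetric]
proof (intro allI sum.cong refl)
  fix a b j
  show "x j * F j a b = - (x j * F j b a)"
    using assms[of j] unfolding skew_def by (metis mult_minus_right)
qed

lemma linext_unitv: "linext F (unitv j) = F j"
  by (simp add: linext_def)

lemma tst_type_skew_family_zero:
  fixes C :: "'w::finite + 'z::finite \<Rightarrow> 'w + 'z \<Rightarrow> 'w + 'z \<Rightarrow> 'k::field"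
    and A :: "'w \<Rightarrow> 'w \<Rightarrow> 'w \<Rightarrow> 'k"
  assumes lie: "lie_algebra C" and tst: "tst_type C"
    and skew: "\<And>y. skew (A y)"
    and compat: "\<And>a x y q. (\<Sum>s\<in>UNIV. C (Inl x) (Inl s) (Inr a) * A y s q)
                       = (\<Sum>s\<in>UNIV. C (Inl y) (Inl s) (Inr a) * A x s q)"
  shows "A y = (\<lambda>_ _. 0)"
proof -
  define t where "t i p q = C (Inl p) (Inl q) (Inr i)" for i p q
  have t_antisym: "t i p q = - t i q p" for i p q
    unfolding t_def by (rule lie_algebra_struct_antisym[OF lie])
  have A_antisym: "A y p q = - A y q p" for y p q
    using skew unfolding skew_def by blast
  \<comment> \<open>g i k w v y is the entry (w, v) of T_i A_y T_k^t; it is symmetric in (w, y) by compat and changes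
    sign under (i, w) \<leftrightarrow> (k, v) because A_y is skew, and these two symmetries force g to be
    antisymmetric in (i, k), which is exactly the TST condition for A_y.\<close>
  define g where "g i k w v y = (\<Sum>q\<in>UNIV. (\<Sum>p\<in>UNIV. t i w p * A y p q) * t k v q)" for i k w v y
  have g_sym: "g i k w v y = g i k y v w" for i k w v y
    unfolding g_def t_def by (simp only: compat)
  have g_swap: "g i k w v y = - g k i v w y" for i k w v y
  proof -
    have "g k i v w y = (\<Sum>p\<in>UNIV. \<Sum>q\<in>UNIV. t k v p * A y p q * t i w q)"
      unfolding g_def by (subst sum.swap) (simp add: sum_distrib_right)
    also have "\<dots> = (\<Sum>q\<in>UNIV. \<Sum>p\<in>UNIV. - (t i w p * A y p q * t k v q))"
      by (intro sum.cong refl, subst A_antisym, simp)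
    also have "\<dots> = - g i k w v y"
      unfolding g_def by (simp add: sum_distrib_right sum_negf)
    finally show ?thesis by simp
  qed
  have g_antisym: "g i k w v y = - g k i w v y" for i k w v y
  proof -
    have "g i k w v y = g i k y v w" by (rule g_sym)
    also have "\<dots> = - g k i v y w" by (rule g_swap)
    also have "g k i v y w = g k i w y v" by (rule g_sym)
    also have "g k i w y v = - g i k y w v" by (rule g_swap)
    also have "g i k y w v = g i k v w y" by (rule g_sym)
    also have "g i k v w y = - g k i w v y" by (rule g_swap)
    finally show ?thesis by simp
  qed
  have T_A_T: "Tcov C i (Smap (A y) (Tcov C k v)) q = - (\<Sum>p\<in>UNIV. v p * g i k q p y)" for i k v q
  proof -
    have "Tcov C i (Smap (A y) (Tcov C k v)) q
        = (\<Sum>p\<in>UNIV. \<Sum>q'\<in>UNIV. \<Sum>p'\<in>UNIV. A y p q' * (v p' * t k p' q') * t i p q)"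
      by (simp add: Tcov_coord Smap_def t_def sum_distrib_left sum_distrib_right)
    also have "\<dots> = (\<Sum>p'\<in>UNIV. \<Sum>q'\<in>UNIV. \<Sum>p\<in>UNIV. - (v p' * (t i q p * A y p q' * t k p' q')))"
      by (subst sum.swap, subst (2) sum.swap, subst sum.swap)
        (intro sum.cong refl, subst (2) t_antisym, simp)
    also have "\<dots> = - (\<Sum>p\<in>UNIV. v p * g i k q p y)"
      unfolding g_def by (simp add: sum_distrib_left sum_distrib_right sum_negf)
    finally show ?thesis .
  qed
  have "(\<lambda>q. Tcov C i (Smap (A y) (Tcov C k v)) q + Tcov C k (Smap (A y) (Tcov C i v)) q) = (\<lambda>_. 0)"
    for i k v
    by (simp add: T_A_T g_antisym[of k i] sum_negf)
  then show ?thesis using tst unfolding tst_type_def by blast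
qed

locale two_step_nilpotent_lie =
  fixes C :: "'w::finite + 'z::finite \<Rightarrow> 'w + 'z \<Rightarrow> 'w + 'z \<Rightarrow> 'k::field"
  assumes lie: "lie_algebra C"
    and nil: "two_step_nilpotent C"
    and cent: "center C = range (embZ :: ('z \<Rightarrow> 'k) \<Rightarrow> _)"
begin

lemma br_in_center: "br C x y \<in> center C"
  unfolding center_def
proof (intro CollectI allI ext)
  fix w r
  show "br C (br C x y) w r = 0"
    using lie_algebra_br_antisym[OF lie, of "br C x y" w r] nil
    unfolding two_step_nilpotent_def by simp
qed

lemma unitv_Inr_in_center: "unitv (Inr i) \<in> center C"
  using cent embZ_unitv[of i] by (metis rangeI)

lemma struct_const_Inl: "C P Q (Inl w) = 0"
proof -
  obtain z where "br C (unitv P) (unitv Q) = embZ z"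
    using br_in_center[of "unitv P" "unitv Q"] cent by blast
  then show ?thesis by (metis br_unitv embZ_def sum.case(1))
qed

lemma struct_const_Inr_left: "C (Inr i) Q r = 0"
  using unitv_Inr_in_center[of i] br_unitv[of C "Inr i" Q r] unfolding center_def by simp

lemma struct_const_Inr_right: "C Q (Inr i) r = 0"
  using struct_const_Inr_left lie_algebra_struct_antisym[OF lie] by (metis neg_equal_0_iff_equal)

lemma br_Inl: "br C x y (Inl w) = 0"
  by (simp add: br_def struct_const_Inl)

lemma br_unitv_Inr_left: "br C (unitv (Inr i)) x = (\<lambda>_. 0)"
  and br_unitv_Inr_right: "br C x (unitv (Inr i)) = (\<lambda>_. 0)"
  by (auto simp: br_def unitv_def struct_const_Inr_left struct_const_Inr_right intro!: sum.neutral)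

end

locale tst_lie_bialgebra = two_step_nilpotent_lie C
  for C :: "'w::finite + 'z::{finite,linorder} \<Rightarrow> 'w + 'z \<Rightarrow> 'w + 'z \<Rightarrow> 'k::field_char_0" +
  fixes d :: "('w + 'z \<Rightarrow> 'k) \<Rightarrow> 'w + 'z \<Rightarrow> 'w + 'z \<Rightarrow> 'k"
  assumes tst: "tst_type C"
    and inv: "invariants2 C = Lambda2z"
    and bialg: "lie_bialgebra C d"
begin

lemma d_linear: "linear2 d"
  and d_skew: "skew (d x)"
  and d_cojacobi: "cojacobi TYPE('w + 'z) d"
  and d_cocycle: "d (br C x y) = (\<lambda>p q. adL C x (d y) p q - adL C y (d x) p q)"
  using bialg unfolding lie_bialgebra_def by blast+

lemma d_antisym: "d x P Q = - d x Q P"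
  using d_skew unfolding skew_def by blast

lemma d_expand: "d x P Q = (\<Sum>R\<in>UNIV. x R * d (unitv R) P Q)"
  by (rule linear2_expand[OF d_linear])

lemma d_cyclic:
  "(\<Sum>P\<in>UNIV. d x P r * d (unitv P) p q + d x P p * d (unitv P) q r + d x P q * d (unitv P) r p) = 0"
  using d_cojacobi cojacobi_iff_cyclic[of d, OF d_skew] by blast

lemma d_central_invariant: "d (unitv (Inr i)) \<in> invariants2 C"
  unfolding invariants2_def
proof (intro CollectI conjI allI d_skew)
  fix x
  show "adL C x (d (unitv (Inr i))) = (\<lambda>_ _. 0)"
    using d_cocycle[of x "unitv (Inr i)"]
    by (simp add: br_unitv_Inr_left br_unitv_Inr_right linear2_zero[OF d_linear] adL_def)
qed

lemma d_central_Inl_left: "d (unitv (Inr i)) (Inl p) Q = 0"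
  and d_central_Inl_right: "d (unitv (Inr i)) P (Inl q) = 0"
proof -
  obtain B where "d (unitv (Inr i)) = embL2 B"
    using d_central_invariant inv unfolding Lambda2z_def by auto
  then show "d (unitv (Inr i)) (Inl p) Q = 0" "d (unitv (Inr i)) P (Inl q) = 0"
    by (simp_all add: embL2_def split: sum.split)
qed

lemma d_W_block_zero: "d (unitv (Inl y)) (Inl p) (Inl q) = 0"
proof -
  define A where "A y p q = d (unitv (Inl y)) (Inl p) (Inl q)" for y p q
  have adL_W: "adL C (unitv (Inl u)) (d (unitv (Inl w))) (Inr a) (Inl q)
      = (\<Sum>s\<in>UNIV. C (Inl u) (Inl s) (Inr a) * A w s q)" for u w a q
    by (simp add: adL_def br_unitv struct_const_Inl struct_const_Inr_right sum_UNIV_Plus A_def)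
  have "(\<Sum>s\<in>UNIV. C (Inl u) (Inl s) (Inr a) * A w s q) = (\<Sum>s\<in>UNIV. C (Inl w) (Inl s) (Inr a) * A u s q)"
    for a u w q
  proof -
    have "d (br C (unitv (Inl u)) (unitv (Inl w))) (Inr a) (Inl q) = 0"
      by (subst d_expand) (simp add: sum_UNIV_Plus br_Inl d_central_Inl_right)
    then show ?thesis using d_cocycle[of "unitv (Inl u)" "unitv (Inl w)"] by (simp add: adL_W)
  qed
  moreover have "skew (A w)" for w
    unfolding A_def skew_def using d_antisym by blast
  ultimately have "A y = (\<lambda>_ _. 0)"
    using tst_type_skew_family_zero[OF lie tst] by blast
  then show ?thesis unfolding A_def by metis
qed

definition dz :: "'z \<Rightarrow> 'z \<Rightarrow> 'z \<Rightarrow> 'k" where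
  "dz i a b = d (unitv (Inr i)) (Inr a) (Inr b)"

definition D :: "'z \<Rightarrow> 'w \<Rightarrow> 'w \<Rightarrow> 'k" where
  "D i p q = d (unitv (Inl q)) (Inl p) (Inr i)"

definition Phi :: "'w \<Rightarrow> 'z \<Rightarrow> 'z \<Rightarrow> 'k" where
  "Phi p a b = d (unitv (Inl p)) (Inr a) (Inr b)"

lemma d_basis_entries:
  "d (unitv (Inr j)) (Inr a) (Inr b) = dz j a b"
  "d (unitv (Inl s)) (Inl p) (Inr i) = D i p s"
  "d (unitv (Inl s)) (Inr i) (Inl p) = - D i p s"
  "d (unitv (Inl s)) (Inr a) (Inr b) = Phi s a b"
  "d (unitv (Inl s)) (Inl p) (Inl q) = 0"
  "d (unitv (Inr j)) (Inl p) Q = 0"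
  "d (unitv (Inr j)) P (Inl q) = 0"
  by (simp_all add: dz_def D_def Phi_def d_antisym[of _ "Inr i"] d_W_block_zero
      d_central_Inl_left d_central_Inl_right)

lemma d_embZ: "d (embZ z) = embL2 (linext dz z)"
proof (intro ext)
  fix P Q
  show "d (embZ z) P Q = embL2 (linext dz z) P Q"
    by (subst d_expand, cases P; cases Q)
      (simp_all add: sum_UNIV_Plus embZ_def embL2_def linext_def d_basis_entries)
qed

lemma d_embW_entries:
  "d (embW v) (Inl p) (Inr c) = matv (D c) v p"
  "d (embW v) (Inr c) (Inl p) = - matv (D c) v p"
  "d (embW v) (Inr a) (Inr b) = linext Phi v a b"
  "d (embW v) (Inl p) (Inl q) = 0"
  by (subst d_expand; simp add: sum_UNIV_Plus embW_def d_basis_entries matv_def linext_def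
      mult.commute sum_negf)+

lemma d_embW:
  "d (embW v) = (\<lambda>P Q. (\<Sum>i\<in>UNIV. wedge (embW (matv (D i) v)) (unitv (Inr i)) P Q) + embL2 (linext Phi v) P Q)"
proof (intro ext)
  fix P Q
  show "d (embW v) P Q = (\<Sum>i\<in>UNIV. wedge (embW (matv (D i) v)) (unitv (Inr i)) P Q) + embL2 (linext Phi v) P Q"
    by (cases P; cases Q; simp only: d_embW_entries wedge_def embW_apply;
        simp add: embL2_def unitv_def sum_negf cong: if_cong)
qed

lemma dz_skew: "skew (dz i)"
  unfolding skew_def dz_def using d_antisym by blast

lemma Phi_skew: "skew (Phi p)"
  unfolding skew_def Phi_def using d_antisym by blast

lemma cojacobi_dz: "cojacobi TYPE('z) (linext dz)"
  unfolding cojacobi_iff_cyclic[of "linext dz", OF linext_skew[OF dz_skew]] linext_unitv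
proof (intro allI)
  fix x p q r
  show "(\<Sum>P\<in>UNIV. linext dz x P r * dz P p q + linext dz x P p * dz P q r + linext dz x P q * dz P r p) = 0"
    using d_cyclic[where x = "embZ x" and p = "Inr p" and q = "Inr q" and r = "Inr r"]
    by (simp add: sum_UNIV_Plus d_embZ embL2_def d_basis_entries)
qed

lemma D_commutator:
  "(\<lambda>p q. \<Sum>r\<in>UNIV. D a p r * D b r q - D b p r * D a r q) = (\<lambda>p q. \<Sum>i\<in>UNIV. dz i a b * D i p q)"
proof (intro ext)
  fix p q
  have "(\<Sum>r\<in>UNIV. D a p r * D b r q) - (\<Sum>r\<in>UNIV. D b p r * D a r q) - (\<Sum>i\<in>UNIV. dz i a b * D i p q) = 0"
    using d_cyclic[where x = "unitv (Inl q)" and p = "Inl p" and q = "Inr a" and r = "Inr b"]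
    by (simp add: sum_UNIV_Plus d_basis_entries sum.distrib sum_negf algebra_simps)
  then show "(\<Sum>r\<in>UNIV. D a p r * D b r q - D b p r * D a r q) = (\<Sum>i\<in>UNIV. dz i a b * D i p q)"
    by (simp add: sum_subtractf)
qed

lemma adL_embW_Inr:
  "adL C (embW x) (d (embW y)) (Inr a) (Inr b) = Tform C a x (matv (D b) y) - Tform C b x (matv (D a) y)"
proof -
  have "br C (embW x) (unitv (Inl s)) (Inr i) = Tform C i x (unitv s)" for s i
    by (simp add: Tform_def embW_unitv)
  then have "adL C (embW x) (d (embW y)) (Inr a) (Inr b)
      = (\<Sum>s\<in>UNIV. Tform C a x (unitv s) * matv (D b) y s) - (\<Sum>s\<in>UNIV. Tform C b x (unitv s) * matv (D a) y s)"
    by (simp add: adL_def sum_UNIV_Plus br_unitv_Inr_right d_embW_entries sum_subtractf[symmetric] algebra_simps)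
  then show ?thesis by (simp only: Tform_expand_right)
qed

lemma Tform_dz_compat:
  "(\<lambda>a b. \<Sum>i\<in>UNIV. Tform C i x y * dz i a b) =
   (\<lambda>a b. \<Sum>i\<in>UNIV. \<Sum>j\<in>UNIV.
      (Tform C i (matv (D j) x) y + Tform C i x (matv (D j) y)) * wedge (unitv i) (unitv j) a b)"
proof (intro ext)
  fix a b
  have "d (br C (embW x) (embW y)) (Inr a) (Inr b) = (\<Sum>i\<in>UNIV. Tform C i x y * dz i a b)"
    by (subst d_expand) (simp add: sum_UNIV_Plus br_Inl d_basis_entries Tform_def)
  then show "(\<Sum>i\<in>UNIV. Tform C i x y * dz i a b) = (\<Sum>i\<in>UNIV. \<Sum>j\<in>UNIV.
      (Tform C i (matv (D j) x) y + Tform C i x (matv (D j) y)) * wedge (unitv i) (unitv j) a b)"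
    using d_cocycle[of "embW x" "embW y"]
    by (simp add: sum_wedge_unitv adL_embW_Inr Tform_antisym[OF lie, of _ y]) (simp add: algebra_simps)
qed

lemma Phi_cocycle:
  "(\<lambda>a b c. (\<Sum>i\<in>UNIV. wedge21 (linext Phi (matv (D i) v)) (unitv i) a b c) +
      (\<Sum>a'\<in>UNIV. \<Sum>b'\<in>{b'. a' < b'}. linext Phi v a' b' *
          (wedge21 (dz a') (unitv b') a b c - wedge12 (unitv a') (dz b') a b c)))
    = (\<lambda>_ _ _. 0)"
proof (intro ext)
  fix a b c
  have "(\<Sum>i\<in>UNIV. wedge21 (linext Phi (matv (D i) v)) (unitv i) a b c)
      = (\<Sum>s\<in>UNIV. matv (D c) v s * Phi s a b + matv (D a) v s * Phi s b c + matv (D b) v s * Phi s c a)"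
    by (simp add: wedge21_def sum.distrib linext_def unitv_def cong: if_cong)
  moreover have "(\<Sum>a'\<in>UNIV. \<Sum>b'\<in>{b'. a' < b'}. linext Phi v a' b' *
          (wedge21 (dz a') (unitv b') a b c - wedge12 (unitv a') (dz b') a b c))
      = (\<Sum>j\<in>UNIV. linext Phi v j c * dz j a b + linext Phi v j a * dz j b c + linext Phi v j b * dz j c a)"
    by (rule sum_less_pairs_wedge[OF linext_skew[OF Phi_skew]])
  moreover have "(\<Sum>s\<in>UNIV. matv (D c) v s * Phi s a b + matv (D a) v s * Phi s b c + matv (D b) v s * Phi s c a)
      + (\<Sum>j\<in>UNIV. linext Phi v j c * dz j a b + linext Phi v j a * dz j b c + linext Phi v j b * dz j c a) = 0"
    using d_cyclic[where x = "embW v" and p = "Inr a" and q = "Inr b" and r = "Inr c"]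
    by (simp add: sum_UNIV_Plus d_embW_entries d_basis_entries)
  ultimately show "(\<Sum>i\<in>UNIV. wedge21 (linext Phi (matv (D i) v)) (unitv i) a b c) +
      (\<Sum>a'\<in>UNIV. \<Sum>b'\<in>{b'. a' < b'}. linext Phi v a' b' *
          (wedge21 (dz a') (unitv b') a b c - wedge12 (unitv a') (dz b') a b c)) = 0"
    by simp
qed

end

theorem mainTheorem7:
  fixes C :: "'w::finite + 'z::{finite,linorder} \<Rightarrow> 'w + 'z \<Rightarrow> 'w + 'z \<Rightarrow> 'k::field_char_0"
    and d :: "('w + 'z \<Rightarrow> 'k) \<Rightarrow> 'w + 'z \<Rightarrow> 'w + 'z \<Rightarrow> 'k"
  assumes lie: "lie_algebra C"
    and nil: "two_step_nilpotent C"
    and cent: "center C = range (embZ :: ('z \<Rightarrow> 'k) \<Rightarrow> _)"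
    and tst: "tst_type C"
    and inv: "invariants2 C = Lambda2z"
    and bialg: "lie_bialgebra C d"
  shows "\<exists>(dz :: 'z \<Rightarrow> 'z \<Rightarrow> 'z \<Rightarrow> 'k) (D :: 'z \<Rightarrow> 'w \<Rightarrow> 'w \<Rightarrow> 'k) (Phi :: 'w \<Rightarrow> 'z \<Rightarrow> 'z \<Rightarrow> 'k).
     \<comment> \<open>(a)\<close>
     (\<forall>i. skew (dz i)) \<and> cojacobi TYPE('z) (linext dz) \<and>
     \<comment> \<open>(b)\<close>
     (\<forall>a b. a < b \<longrightarrow>
        (\<lambda>p q. \<Sum>r\<in>UNIV. D a p r * D b r q - D b p r * D a r q) =
        (\<lambda>p q. \<Sum>i\<in>UNIV. dz i a b * D i p q)) \<and>
     (\<forall>x y. (\<lambda>a b. \<Sum>i\<in>UNIV. Tform C i x y * dz i a b) =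
        (\<lambda>a b. \<Sum>i\<in>UNIV. \<Sum>j\<in>UNIV.
            (Tform C i (matv (D j) x) y + Tform C i x (matv (D j) y)) * wedge (unitv i) (unitv j) a b)) \<and>
     \<comment> \<open>(c)\<close>
     (\<forall>p. skew (Phi p)) \<and>
     (\<forall>v. (\<lambda>a b c. (\<Sum>i\<in>UNIV. wedge21 (linext Phi (matv (D i) v)) (unitv i) a b c) +
          (\<Sum>a'\<in>UNIV. \<Sum>b'\<in>{b'. a' < b'}. linext Phi v a' b' *
              (wedge21 (dz a') (unitv b') a b c - wedge12 (unitv a') (dz b') a b c)))
        = (\<lambda>_ _ _. 0)) \<and>
     \<comment> \<open>form of delta\<close>
     (\<forall>z. d (embZ z) = embL2 (linext dz z)) \<and>
     (\<forall>v. d (embW v) = (\<lambda>P Q. (\<Sum>i\<in>UNIV. wedge (embW (matv (D i) v)) (unitv (Inr i)) P Q)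
                                + embL2 (linext Phi v) P Q))"
proof -
  interpret tst_lie_bialgebra C d
    by unfold_locales (fact lie nil cent tst inv bialg)+
  show ?thesis
    by (intro exI[of _ dz] exI[of _ D] exI[of _ Phi] conjI allI impI)
      (rule dz_skew cojacobi_dz D_commutator Tform_dz_compat Phi_skew Phi_cocycle d_embZ d_embW)+
qed

end
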